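(* Every finitely generated free semigroup is weakly homogeneous.
   Context: A semigroup $S$ is weakly homogeneous if for every isomorphism $\varphi:A\to B$ between finitely generated subsemigroups $A,B$ of $S$ such that both $\varphi$ and $\varphi^{-1}:B\to A$ extend to endomorphisms of $S$, the map $\varphi$ extends to an automorphism of $S$. *)

theory Defs
  imports Main
begin

text \<open>A semigroup is given by a carrier set S and a binary operation f (total on the type,
  only its behaviour on S matters).\<close>

inductive_set gen_subsemigroup :: "('a \<Rightarrow> 'a \<Rightarrow> 'a) \<Rightarrow> 'a set \<Rightarrow> 'a set"
  for f :: "'a \<Rightarrow> 'a \<Rightarrow> 'a" and G :: "'a set" where
  base: "x \<in> G \<Longrightarrow> x \<in> gen_subsemigroup f G"
| step: "x \<in> gen_subsemigroup f G \<Longrightarrow> y \<in> gen_subsemigroup f G \<Longrightarrow> f x y \<in> gen_subsemigroup f G"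

definition fg_subsemigroup :: "'a set \<Rightarrow> ('a \<Rightarrow> 'a \<Rightarrow> 'a) \<Rightarrow> 'a set \<Rightarrow> bool" where
  "fg_subsemigroup S f A \<longleftrightarrow> (\<exists>G. finite G \<and> G \<subseteq> S \<and> A = gen_subsemigroup f G)"

definition hom_on :: "'a set \<Rightarrow> ('a \<Rightarrow> 'a \<Rightarrow> 'a) \<Rightarrow> ('a \<Rightarrow> 'a) \<Rightarrow> bool" where
  "hom_on A f h \<longleftrightarrow> (\<forall>x\<in>A. \<forall>y\<in>A. h (f x y) = f (h x) (h y))"

definition endomorphism :: "'a set \<Rightarrow> ('a \<Rightarrow> 'a \<Rightarrow> 'a) \<Rightarrow> ('a \<Rightarrow> 'a) \<Rightarrow> bool" where
  "endomorphism S f h \<longleftrightarrow> h ` S \<subseteq> S \<and> hom_on S f h"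

definition automorphism :: "'a set \<Rightarrow> ('a \<Rightarrow> 'a \<Rightarrow> 'a) \<Rightarrow> ('a \<Rightarrow> 'a) \<Rightarrow> bool" where
  "automorphism S f h \<longleftrightarrow> bij_betw h S S \<and> hom_on S f h"

definition semigroup_iso :: "('a \<Rightarrow> 'a \<Rightarrow> 'a) \<Rightarrow> ('a \<Rightarrow> 'a) \<Rightarrow> 'a set \<Rightarrow> 'a set \<Rightarrow> bool" where
  "semigroup_iso f \<phi> A B \<longleftrightarrow> bij_betw \<phi> A B \<and> hom_on A f \<phi>"

definition weakly_homogeneous :: "'a set \<Rightarrow> ('a \<Rightarrow> 'a \<Rightarrow> 'a) \<Rightarrow> bool" where
  "weakly_homogeneous S f \<longleftrightarrow>
    (\<forall>A B \<phi>. fg_subsemigroup S f A \<and> fg_subsemigroup S f B \<and> semigroup_iso f \<phi> A B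
       \<and> (\<exists>e. endomorphism S f e \<and> (\<forall>x\<in>A. e x = \<phi> x))
       \<and> (\<exists>e. endomorphism S f e \<and> (\<forall>y\<in>B. e y = inv_into A \<phi> y))
       \<longrightarrow> (\<exists>\<alpha>. automorphism S f \<alpha> \<and> (\<forall>x\<in>A. \<alpha> x = \<phi> x)))"

definition free_semigroup :: "'a set \<Rightarrow> 'a list set" where
  "free_semigroup X = {w. w \<noteq> [] \<and> set w \<subseteq> X}"

end

theory Submission
  imports Defs
begin

text \<open>An endomorphism of the free semigroup never shortens a word, and it preserves the length
  of a word only if it sends each of its letters to a letter. If endomorphisms \<open>e\<^sub>1\<close>, \<open>e\<^sub>2\<close> restrict
  to mutually inverse maps \<open>A \<rightarrow> B\<close> and \<open>B \<rightarrow> A\<close>, then \<open>e\<^sub>2 \<circ> e\<^sub>1\<close> is the identity on \<open>A\<close>, so \<open>e\<^sub>1\<close>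
  preserves lengths on \<open>A\<close> and acts there as a renaming of letters; symmetrically for \<open>e\<^sub>2\<close>.
  Hence \<open>\<phi>\<close> is induced by a bijection between the letters occurring in \<open>A\<close> and those occurring
  in \<open>B\<close>. As the alphabet is finite, this bijection extends to a permutation of the alphabet,
  which induces the required automorphism.\<close>

lemma gen_subsemigroup_subset:
  assumes "G \<subseteq> S" and "\<And>x y. x \<in> S \<Longrightarrow> y \<in> S \<Longrightarrow> f x y \<in> S"
  shows "gen_subsemigroup f G \<subseteq> S"
proof
  fix x assume "x \<in> gen_subsemigroup f G"
  then show "x \<in> S" by induction (use assms in auto)
qed

lemma fg_subsemigroup_subset:
  assumes "fg_subsemigroup S f A" and "\<And>x y. x \<in> S \<Longrightarrow> y \<in> S \<Longrightarrow> f x y \<in> S"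
  shows "A \<subseteq> S"
  using assms gen_subsemigroup_subset unfolding fg_subsemigroup_def by blast

lemma append_in_free_semigroup:
  "v \<in> free_semigroup X \<Longrightarrow> w \<in> free_semigroup X \<Longrightarrow> v @ w \<in> free_semigroup X"
  by (auto simp: free_semigroup_def)

definition letters :: "'a list set \<Rightarrow> 'a set" where
  "letters A = \<Union> (set ` A)"

lemma letters_free_semigroup_subset: "A \<subseteq> free_semigroup X \<Longrightarrow> letters A \<subseteq> X"
  by (auto simp: letters_def free_semigroup_def)

lemma map_eq_on_letters: "w \<in> A \<Longrightarrow> (\<And>x. x \<in> letters A \<Longrightarrow> f x = g x) \<Longrightarrow> map f w = map g w"
  by (auto simp: letters_def)

context
  fixes X :: "'a set" and e :: "'a list \<Rightarrow> 'a list"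
  assumes endo: "endomorphism (free_semigroup X) (@) e"
begin

lemma endomorphism_letter_nonempty:
  assumes "x \<in> X" shows "e [x] \<noteq> []"
proof -
  have "[x] \<in> free_semigroup X"
    using assms by (simp add: free_semigroup_def)
  then have "e [x] \<in> free_semigroup X"
    using endo by (auto simp: endomorphism_def)
  then show ?thesis
    by (simp add: free_semigroup_def)
qed

lemma endomorphism_eq_concat:
  "w \<in> free_semigroup X \<Longrightarrow> e w = concat (map (\<lambda>x. e [x]) w)"
proof (induction w)
  case Nil
  then show ?case by (simp add: free_semigroup_def)
next
  case (Cons x w)
  show ?case
  proof (cases "w = []")
    case False
    with Cons.prems have "[x] \<in> free_semigroup X" "w \<in> free_semigroup X"
      by (auto simp: free_semigroup_def)
    then have "e ([x] @ w) = e [x] @ e w"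
      using endo by (auto simp: endomorphism_def hom_on_def)
    with Cons.IH \<open>w \<in> free_semigroup X\<close> show ?thesis by simp
  qed simp
qed

lemma endomorphism_length:
  assumes "w \<in> free_semigroup X"
  shows "length (e w) = length w + (\<Sum>x\<leftarrow>w. length (e [x]) - 1)"
proof -
  have "\<And>x. x \<in> set w \<Longrightarrow> length (e [x]) = Suc (length (e [x]) - 1)"
    using assms endomorphism_letter_nonempty by (auto simp: free_semigroup_def)
  then have "(\<Sum>x\<leftarrow>w. length (e [x])) = (\<Sum>x\<leftarrow>w. Suc (length (e [x]) - 1))"
    by (metis (no_types, lifting) map_cong)
  then show ?thesis
    using endomorphism_eq_concat[OF assms] by (simp add: length_concat comp_def sum_list_Suc)
qed

lemma endomorphism_length_ge: "w \<in> free_semigroup X \<Longrightarrow> length w \<le> length (e w)"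
  using endomorphism_length by simp

lemma endomorphism_letter_if_length_le:
  assumes "w \<in> free_semigroup X" and "length (e w) \<le> length w" and "x \<in> set w"
  shows "length (e [x]) = 1"
proof -
  have "(\<Sum>x\<leftarrow>w. length (e [x]) - 1) = 0"
    using assms(2) endomorphism_length[OF assms(1)] by simp
  then have "length (e [x]) \<le> 1"
    using assms(3) by simp
  moreover have "x \<in> X"
    using assms(1,3) by (auto simp: free_semigroup_def)
  ultimately show ?thesis
    using endomorphism_letter_nonempty by (cases "e [x]") auto
qed

end

lemma endomorphism_with_left_inverse_renames_letters:
  assumes "endomorphism (free_semigroup X) (@) e" and "endomorphism (free_semigroup X) (@) e'"
    and "A \<subseteq> free_semigroup X" and "\<And>w. w \<in> A \<Longrightarrow> e' (e w) = w"
  shows "\<forall>w\<in>A. e w = map (\<lambda>x. hd (e [x])) w"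
proof
  fix w assume "w \<in> A"
  then have w: "w \<in> free_semigroup X" using assms(3) by blast
  have "e w \<in> free_semigroup X"
    using assms(1) w by (auto simp: endomorphism_def)
  then have "length (e w) \<le> length w"
    using endomorphism_length_ge[OF assms(2)] assms(4)[OF \<open>w \<in> A\<close>] by metis
  then have "\<And>x. x \<in> set w \<Longrightarrow> e [x] = [hd (e [x])]"
    using endomorphism_letter_if_length_le[OF assms(1) w] by (metis One_nat_def length_0_conv
        length_Suc_conv list.sel(1))
  then have "map (\<lambda>x. e [x]) w = map (\<lambda>x. [hd (e [x])]) w"
    by (simp cong: map_cong)
  then show "e w = map (\<lambda>x. hd (e [x])) w"
    using endomorphism_eq_concat[OF assms(1) w] by (metis concat_map_singleton)
qed

lemma letters_bij_betw_if_map_inverse: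
  assumes "\<And>w. w \<in> A \<Longrightarrow> map \<sigma> w \<in> B" and "\<And>v. v \<in> B \<Longrightarrow> map \<tau> v \<in> A"
    and "\<And>w. w \<in> A \<Longrightarrow> map \<tau> (map \<sigma> w) = w" and "\<And>v. v \<in> B \<Longrightarrow> map \<sigma> (map \<tau> v) = v"
  shows "bij_betw \<sigma> (letters A) (letters B)"
proof (rule bij_betw_byWitness[where f' = \<tau>])
  show "\<forall>x\<in>letters A. \<tau> (\<sigma> x) = x"
    using assms(3) by (auto simp: letters_def map_eq_conv[of "\<tau> \<circ> \<sigma>" _ id, simplified])
  show "\<forall>x\<in>letters B. \<sigma> (\<tau> x) = x"
    using assms(4) by (auto simp: letters_def map_eq_conv[of "\<sigma> \<circ> \<tau>" _ id, simplified])
  show "\<sigma> ` letters A \<subseteq> letters B"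
  proof
    fix y assume "y \<in> \<sigma> ` letters A"
    then obtain w x where "w \<in> A" "x \<in> set w" "y = \<sigma> x" by (auto simp: letters_def)
    then show "y \<in> letters B"
      using assms(1) unfolding letters_def by (metis UN_iff image_eqI list.set_map)
  qed
  show "\<tau> ` letters B \<subseteq> letters A"
  proof
    fix y assume "y \<in> \<tau> ` letters B"
    then obtain v x where "v \<in> B" "x \<in> set v" "y = \<tau> x" by (auto simp: letters_def)
    then show "y \<in> letters A"
      using assms(2) unfolding letters_def by (metis UN_iff image_eqI list.set_map)
  qed
qed

lemma automorphism_map_permutation:
  assumes p: "bij_betw p X X"
  shows "automorphism (free_semigroup X) (@) (map p)"
proof -
  have "bij_betw (map p) (free_semigroup X) (free_semigroup X)"
  proof (rule bij_betw_byWitness[where f' = "map (inv_into X p)"])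
    show "\<forall>w\<in>free_semigroup X. map (inv_into X p) (map p w) = w"
      using p by (auto simp: free_semigroup_def bij_betw_inv_into_left intro!: map_idI)
    show "\<forall>w\<in>free_semigroup X. map p (map (inv_into X p) w) = w"
      using p by (auto simp: free_semigroup_def bij_betw_inv_into_right intro!: map_idI)
    show "map p ` free_semigroup X \<subseteq> free_semigroup X"
      using p by (force simp: free_semigroup_def bij_betw_def)
    show "map (inv_into X p) ` free_semigroup X \<subseteq> free_semigroup X"
      using p by (force simp: free_semigroup_def bij_betw_def inv_into_into)
  qed
  then show ?thesis
    by (simp add: automorphism_def hom_on_def)
qed

lemma bij_betw_extend_to_permutation:
  assumes "finite X" "Y \<subseteq> X" "Z \<subseteq> X" "bij_betw s Y Z"
  shows "\<exists>p. bij_betw p X X \<and> (\<forall>x\<in>Y. p x = s x)"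
proof -
  have "card (X - Y) = card (X - Z)"
    using assms bij_betw_same_card by (metis card_Diff_subset finite_subset)
  then obtain g where g: "bij_betw g (X - Y) (X - Z)"
    using assms(1) finite_same_card_bij by (meson finite_Diff)
  define p where "p x = (if x \<in> Y then s x else g x)" for x
  have "bij_betw p Y Z"
    using assms(4) by (rule bij_betw_cong[THEN iffD1, rotated]) (simp add: p_def)
  moreover have "bij_betw p (X - Y) (X - Z)"
    using g by (rule bij_betw_cong[THEN iffD1, rotated]) (simp add: p_def)
  ultimately have "bij_betw p (Y \<union> (X - Y)) (Z \<union> (X - Z))"
    by (rule bij_betw_combine) auto
  moreover have "Y \<union> (X - Y) = X" "Z \<union> (X - Z) = X"
    using assms by auto
  ultimately show ?thesis by (auto simp: p_def)
qed

lemma mutually_inverse_endomorphisms_induced_by_letter_bij: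
  assumes e1: "endomorphism (free_semigroup X) (@) e\<^sub>1"
    and e2: "endomorphism (free_semigroup X) (@) e\<^sub>2"
    and "A \<subseteq> free_semigroup X" "B \<subseteq> free_semigroup X"
    and "e\<^sub>1 ` A \<subseteq> B" "e\<^sub>2 ` B \<subseteq> A"
    and "\<And>w. w \<in> A \<Longrightarrow> e\<^sub>2 (e\<^sub>1 w) = w" "\<And>v. v \<in> B \<Longrightarrow> e\<^sub>1 (e\<^sub>2 v) = v"
  shows "\<exists>\<sigma>. bij_betw \<sigma> (letters A) (letters B) \<and> (\<forall>w\<in>A. e\<^sub>1 w = map \<sigma> w)"
proof -
  define \<sigma> where "\<sigma> x = hd (e\<^sub>1 [x])" for x
  define \<tau> where "\<tau> x = hd (e\<^sub>2 [x])" for x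
  have \<sigma>: "e\<^sub>1 w = map \<sigma> w" if "w \<in> A" for w
    using endomorphism_with_left_inverse_renames_letters[OF e1 e2 assms(3,7)] that
    unfolding \<sigma>_def by blast
  have \<tau>: "e\<^sub>2 v = map \<tau> v" if "v \<in> B" for v
    using endomorphism_with_left_inverse_renames_letters[OF e2 e1 assms(4,8)] that
    unfolding \<tau>_def by blast
  have "bij_betw \<sigma> (letters A) (letters B)"
  proof (rule letters_bij_betw_if_map_inverse[where \<tau> = \<tau>])
    fix w assume "w \<in> A"
    then have "e\<^sub>1 w \<in> B"
      using assms(5) by blast
    then show "map \<sigma> w \<in> B" "map \<tau> (map \<sigma> w) = w"
      using \<sigma>[OF \<open>w \<in> A\<close>] \<tau>[OF \<open>e\<^sub>1 w \<in> B\<close>] assms(7)[OF \<open>w \<in> A\<close>] by metis+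
  next
    fix v assume "v \<in> B"
    then have "e\<^sub>2 v \<in> A"
      using assms(6) by blast
    then show "map \<tau> v \<in> A" "map \<sigma> (map \<tau> v) = v"
      using \<tau>[OF \<open>v \<in> B\<close>] \<sigma>[OF \<open>e\<^sub>2 v \<in> A\<close>] assms(8)[OF \<open>v \<in> B\<close>] by metis+
  qed
  with \<sigma> show ?thesis by blast
qed

theorem mainTheorem4:
  fixes X :: "'a set"
  assumes "finite X"
  shows "weakly_homogeneous (free_semigroup X) (@)"
  unfolding weakly_homogeneous_def
proof (intro allI impI, elim conjE exE)
  fix A B \<phi> e\<^sub>1 e\<^sub>2
  let ?S = "free_semigroup X"
  assume fg: "fg_subsemigroup ?S (@) A" "fg_subsemigroup ?S (@) B"
    and iso: "semigroup_iso (@) \<phi> A B"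
    and e1: "endomorphism ?S (@) e\<^sub>1" "\<forall>x\<in>A. e\<^sub>1 x = \<phi> x"
    and e2: "endomorphism ?S (@) e\<^sub>2" "\<forall>y\<in>B. e\<^sub>2 y = inv_into A \<phi> y"
  have AS: "A \<subseteq> ?S" and BS: "B \<subseteq> ?S"
    using fg_subsemigroup_subset[OF fg(1) append_in_free_semigroup]
      fg_subsemigroup_subset[OF fg(2) append_in_free_semigroup] by blast+
  have \<phi>: "inj_on \<phi> A" "\<phi> ` A = B"
    using iso by (auto simp: semigroup_iso_def bij_betw_def)
  have "e\<^sub>1 ` A \<subseteq> B" "\<And>w. w \<in> A \<Longrightarrow> e\<^sub>2 (e\<^sub>1 w) = w"
    using e1(2) e2(2) \<phi> by auto
  moreover have "e\<^sub>2 ` B \<subseteq> A" "\<And>v. v \<in> B \<Longrightarrow> e\<^sub>1 (e\<^sub>2 v) = v"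
    using e1(2) e2(2) \<phi> inv_into_into f_inv_into_f by fastforce+
  ultimately obtain \<sigma> where \<sigma>: "bij_betw \<sigma> (letters A) (letters B)" "\<forall>w\<in>A. e\<^sub>1 w = map \<sigma> w"
    using mutually_inverse_endomorphisms_induced_by_letter_bij[OF e1(1) e2(1) AS BS] by blast
  obtain p where p: "bij_betw p X X" "\<forall>x\<in>letters A. p x = \<sigma> x"
    using bij_betw_extend_to_permutation[OF assms _ _ \<sigma>(1)] letters_free_semigroup_subset AS BS
    by blast
  have "\<forall>w\<in>A. map p w = \<phi> w"
  proof
    fix w assume "w \<in> A"
    then have "map p w = map \<sigma> w"
      using p(2) by (intro map_eq_on_letters) auto
    with \<open>w \<in> A\<close> show "map p w = \<phi> w"
      using \<sigma>(2) e1(2) by simp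
  qed
  with automorphism_map_permutation[OF p(1)]
  show "\<exists>\<alpha>. automorphism ?S (@) \<alpha> \<and> (\<forall>x\<in>A. \<alpha> x = \<phi> x)" by blast
qed

end
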